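(* Let $G$ be a graph on $d+2$ vertices whose adjacency matrix has second largest eigenvalue $\lambda_2$. If $G$ has a spherical representation in $\mathbb{R}^d$ with distance ratio $k$, then $k = \sqrt{\frac{1}{\lambda_2}+1}$; in particular $\lambda_2 > 0$.
   Context: Graphs are finite and simple; adjacency eigenvalues are listed with multiplicity as $\lambda_1\geq\lambda_2\geq\cdots$. A finite set $S\subset\mathbb{R}^d$ is a 2-distance set if $\{\|p-q\| : p,q\in S, p\neq q\}$ has exactly two elements $\alpha_1>\alpha_2$; its distance ratio is $k=\alpha_1/\alpha_2$; its associated graph has vertex set $S$ with $p,q$ adjacent iff $\|p-q\|=\alpha_1$. $G$ has a spherical representation in $\mathbb{R}^d$ with ratio $k$ if some 2-distance set in $\mathbb{R}^d$ with ratio $k$, lying on a $(d-1)$-dimensional sphere, has associated graph $G$. *)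

theory Defs
  imports "HOL-Analysis.Analysis" "Jordan_Normal_Form.Char_Poly"
    "HOL-Library.Multiset"
begin

definition simple_graph :: "nat set \<Rightarrow> (nat \<Rightarrow> nat \<Rightarrow> bool) \<Rightarrow> bool" where
  "simple_graph V E \<longleftrightarrow> finite V \<and>
     (\<forall>i j. E i j \<longrightarrow> i \<in> V \<and> j \<in> V \<and> i \<noteq> j \<and> E j i)"

definition adj_matrix :: "nat \<Rightarrow> (nat \<Rightarrow> nat \<Rightarrow> bool) \<Rightarrow> real Matrix.mat" where
  "adj_matrix n E = Matrix.mat n n (\<lambda>(i, j). if E i j then 1 else 0)"

text \<open>Adjacency eigenvalues with multiplicity (roots of the characteristic polynomial),
  listed in non-increasing order lambda_1 >= lambda_2 >= ...\<close>
definition adj_eigenvalues :: "nat \<Rightarrow> (nat \<Rightarrow> nat \<Rightarrow> bool) \<Rightarrow> real list" where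
  "adj_eigenvalues n E = rev (sorted_list_of_multiset (proots (char_poly (adj_matrix n E))))"

definition dist_set :: "'a::metric_space set \<Rightarrow> real set" where
  "dist_set S = {dist x y | x y. x \<in> S \<and> y \<in> S \<and> x \<noteq> y}"

definition two_distance_set :: "'a::metric_space set \<Rightarrow> bool" where
  "two_distance_set S \<longleftrightarrow> finite S \<and> card (dist_set S) = 2"

definition distance_ratio :: "'a::metric_space set \<Rightarrow> real" where
  "distance_ratio S = Max (dist_set S) / Min (dist_set S)"

definition associated_graph :: "'a::metric_space set \<Rightarrow> 'a \<Rightarrow> 'a \<Rightarrow> bool" where
  "associated_graph S x y \<longleftrightarrow> x \<in> S \<and> y \<in> S \<and> x \<noteq> y \<and> dist x y = Max (dist_set S)"

text \<open>G = (V, E) has a spherical representation in R^d (d = CARD('n)) with ratio k: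
  an injective placement p of the vertices whose image is a 2-distance set with ratio k,
  lying on a sphere, with associated graph equal (via p) to G.\<close>
definition has_spherical_rep ::
  "'n::finite itself \<Rightarrow> nat set \<Rightarrow> (nat \<Rightarrow> nat \<Rightarrow> bool) \<Rightarrow> real \<Rightarrow> bool" where
  "has_spherical_rep _ V E k \<longleftrightarrow>
     (\<exists>p :: nat \<Rightarrow> real^'n.
        inj_on p V \<and> two_distance_set (p ` V) \<and> distance_ratio (p ` V) = k \<and>
        (\<exists>c r. p ` V \<subseteq> sphere c r) \<and>
        (\<forall>i\<in>V. \<forall>j\<in>V. E i j \<longleftrightarrow> associated_graph (p ` V) (p i) (p j)))"

end

theory Submission
  imports Defs
begin

text \<open>
  Centre the sphere at the origin and rescale so that the shorter distance becomes \<open>sqrt 2\<close>.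
  The Gram matrix of the resulting vectors \<open>q\<^sub>i\<close> is then \<open>\<gamma> J + I - (k\<^sup>2 - 1) A\<close>,
  so with \<open>\<mu> = 1 / (k\<^sup>2 - 1)\<close> and weights \<open>x\<close> on the vertices
  \<open>(k\<^sup>2 - 1) (x\<^sup>T A x - \<mu> |x|\<^sup>2) = \<gamma> (\<Sum>x\<^sub>i)\<^sup>2 - |\<Sum>x\<^sub>i q\<^sub>i|\<^sup>2\<close>.
  On the hyperplane \<open>\<Sum>x\<^sub>i = 0\<close> the form \<open>x\<^sup>T (A - \<mu> I) x\<close> is therefore \<open>\<le> 0\<close>; it is
  positive definite on the span of the eigenvectors with eigenvalue \<open>> \<mu>\<close>, which thus meets
  the hyperplane only in \<open>0\<close>, so at most one eigenvalue exceeds \<open>\<mu>\<close>. On the kernel of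
  \<open>x \<mapsto> \<Sum>x\<^sub>i q\<^sub>i\<close>, which has codimension at most \<open>d\<close>, the form is \<open>\<ge> 0\<close> because \<open>\<gamma> \<ge> 0\<close>
  (otherwise the \<open>d + 2\<close> vectors \<open>q\<^sub>i\<close> would be pairwise obtuse), and the same argument shows
  that at most \<open>d\<close> eigenvalues lie below \<open>\<mu>\<close>. Hence \<open>\<lambda>\<^sub>2 = \<mu>\<close>.
  The orthonormal eigenbasis of \<open>A\<close> is obtained by maximising the Rayleigh quotient on
  invariant subspaces.
\<close>

(* Jordan_Normal_Form's scalar product and vector indexing would clash with \<bullet> and $ on real^'n. *)
no_notation Matrix.scalar_prod (infix "\<bullet>" 70)
no_notation Matrix.vec_index (infixl "$" 100)

section \<open>Spectral theorem for real symmetric matrices\<close>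

lemma symmetric_matrix_inner_commute:
  fixes M :: "real^'m^'m"
  assumes "transpose M = M"
  shows "x \<bullet> (M *v y) = (M *v x) \<bullet> y"
  by (metis assms dot_lmul_matrix vector_transpose_matrix)

lemma linear_coeff_zero_if_quadratic_nonpos:
  fixes a c :: real
  assumes "\<And>t. a * t + c * t\<^sup>2 \<le> 0"
  shows "a = 0"
proof -
  define t where "t = a / (c\<^sup>2 + 1)"
  have pos: "0 < c\<^sup>2 + 1"
    by (simp add: add_nonneg_pos)
  then have "a * t + c * t\<^sup>2 = a\<^sup>2 * (c\<^sup>2 + c + 1) / (c\<^sup>2 + 1)\<^sup>2"
    unfolding t_def by (simp add: divide_simps power2_eq_square) (simp add: algebra_simps)
  then have "a\<^sup>2 * (c\<^sup>2 + c + 1) \<le> 0"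
    using assms[of t] pos by (simp add: divide_le_0_iff)
  moreover have "0 < c\<^sup>2 + c + 1"
    using zero_le_power2[of "c + 1/2"] by (simp add: power2_eq_square algebra_simps)
  ultimately show "a = 0"
    by (simp add: mult_le_0_iff)
qed

lemma rayleigh_maximizer_eigenvector:
  fixes M :: "real^'m^'m"
  assumes sym: "transpose M = M" and S: "subspace S" and inv: "\<And>x. x \<in> S \<Longrightarrow> M *v x \<in> S"
    and u: "u \<in> S" "u \<bullet> u = 1"
    and max: "\<And>y. y \<in> S \<Longrightarrow> y \<bullet> (M *v y) \<le> (u \<bullet> (M *v u)) * (y \<bullet> y)"
  shows "M *v u = (u \<bullet> (M *v u)) *\<^sub>R u"
proof -
  define l where "l = u \<bullet> (M *v u)"
  define w where "w = M *v u - l *\<^sub>R u"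
  have "w \<in> S"
    unfolding w_def using inv u S by (simp add: subspace_diff subspace_scale)
  have wu: "w \<bullet> u = 0"
    unfolding w_def using u by (simp add: inner_diff_left l_def inner_commute[of "M *v u" u])
  have uMw: "u \<bullet> (M *v w) = w \<bullet> w"
    using symmetric_matrix_inner_commute[OF sym, of u w] wu
    by (simp add: w_def inner_diff_left inner_diff_right inner_commute)
  have "(2 * (w \<bullet> w)) * t + (w \<bullet> (M *v w) - l * (w \<bullet> w)) * t\<^sup>2 \<le> 0" for t
  proof -
    have "u + t *\<^sub>R w \<in> S"
      using u \<open>w \<in> S\<close> S by (simp add: subspace_add subspace_scale)
    from max[OF this] show ?thesis
      using u(2) wu uMw symmetric_matrix_inner_commute[OF sym, of w u]
      by (simp add: matrix_vector_right_distrib matrix_vector_mult_scaleR inner_add_left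
          inner_add_right inner_commute l_def power2_eq_square algebra_simps)
  qed
  then have "2 * (w \<bullet> w) = 0"
    by (rule linear_coeff_zero_if_quadratic_nonpos)
  then show ?thesis
    by (simp add: w_def l_def)
qed

lemma symmetric_matrix_eigenvector_in_invariant_subspace:
  fixes M :: "real^'m^'m"
  assumes sym: "transpose M = M" and S: "subspace S" and inv: "\<And>x. x \<in> S \<Longrightarrow> M *v x \<in> S"
    and x0: "x0 \<in> S" "x0 \<noteq> 0"
  obtains u e where "u \<in> S" "u \<bullet> u = 1" "M *v u = e *\<^sub>R u"
proof -
  define K where "K = sphere 0 1 \<inter> S"
  have "compact K"
    unfolding K_def using closed_subspace[OF S] by (intro compact_Int_closed) auto
  moreover have "x0 /\<^sub>R norm x0 \<in> K"
    unfolding K_def using x0 S by (auto simp: subspace_scale)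
  then have "K \<noteq> {}" by blast
  moreover have "continuous_on K (\<lambda>x. x \<bullet> (M *v x))"
    by (intro continuous_intros)
  ultimately obtain u where "u \<in> K" and umax: "\<And>y. y \<in> K \<Longrightarrow> y \<bullet> (M *v y) \<le> u \<bullet> (M *v u)"
    using continuous_attains_sup[of K "\<lambda>x. x \<bullet> (M *v x)"] by blast
  then have u: "u \<in> S" "u \<bullet> u = 1"
    by (auto simp: K_def dot_square_norm)
  have "y \<bullet> (M *v y) \<le> (u \<bullet> (M *v u)) * (y \<bullet> y)" if "y \<in> S" for y
  proof (cases "y = 0")
    case False
    then have "y /\<^sub>R norm y \<in> K"
      using that S by (auto simp: K_def subspace_scale)
    from umax[OF this] False show ?thesis
      by (simp add: matrix_vector_mult_scaleR dot_square_norm field_simps power2_eq_square mult_ac)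
  qed simp
  from rayleigh_maximizer_eigenvector[OF sym S inv u this] u show thesis
    by (intro that) auto
qed

lemma symmetric_matrix_orthonormal_eigenvectors:
  fixes M :: "real^'m^'m"
  assumes sym: "transpose M = M" and "k \<le> CARD('m)"
  shows "\<exists>B. finite B \<and> card B = k \<and> pairwise (\<lambda>b c. b \<bullet> c = 0) B \<and>
           (\<forall>b\<in>B. b \<bullet> b = 1 \<and> (\<exists>e. M *v b = e *\<^sub>R b))"
  using assms(2)
proof (induction k)
  case 0
  show ?case by (rule exI[of _ "{}"]) simp
next
  case (Suc k)
  then obtain B where B: "finite B" "card B = k" "pairwise (\<lambda>b c. b \<bullet> c = 0) B"
    and eig: "\<forall>b\<in>B. b \<bullet> b = 1 \<and> (\<exists>e. M *v b = e *\<^sub>R b)"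
    by auto
  define S where "S = {y. \<forall>b\<in>B. b \<bullet> y = 0}"
  have S: "subspace S"
    using subspace_orthogonal_to_vectors[of B] by (simp add: S_def real_inner_class.orthogonal_def)
  have "dim B < DIM(real^'m)"
    using dim_le_card'[OF B(1)] B(2) Suc.prems by simp
  then obtain x0 where "x0 \<noteq> 0" "\<And>y. y \<in> span B \<Longrightarrow> real_inner_class.orthogonal x0 y"
    using orthogonal_to_subspace_exists by blast
  then have x0: "x0 \<in> S" "x0 \<noteq> 0"
    by (auto simp: S_def real_inner_class.orthogonal_def inner_commute span_base)
  have "M *v y \<in> S" if "y \<in> S" for y
  proof -
    have "b \<bullet> (M *v y) = 0" if "b \<in> B" for b
    proof -
      obtain e where "M *v b = e *\<^sub>R b" using eig \<open>b \<in> B\<close> by blast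
      then show ?thesis
        using symmetric_matrix_inner_commute[OF sym, of b y] \<open>y \<in> S\<close> \<open>b \<in> B\<close> by (simp add: S_def)
    qed
    then show ?thesis by (simp add: S_def)
  qed
  then obtain u e where u: "u \<in> S" "u \<bullet> u = 1" "M *v u = e *\<^sub>R u"
    using symmetric_matrix_eigenvector_in_invariant_subspace[OF sym S _ x0] by blast
  then have "u \<notin> B"
    by (auto simp: S_def)
  have "pairwise (\<lambda>b c. b \<bullet> c = 0) (insert u B)"
    using B(3) u(1) by (auto simp: pairwise_insert S_def inner_commute)
  moreover have "card (insert u B) = Suc k"
    using B \<open>u \<notin> B\<close> by simp
  moreover have "\<forall>b\<in>insert u B. b \<bullet> b = 1 \<and> (\<exists>e. M *v b = e *\<^sub>R b)"
    using eig u by blast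
  ultimately show ?case
    using B(1) by blast
qed

definition orthonormal_eigenbasis :: "real^'v^'v \<Rightarrow> ('v \<Rightarrow> real^'v) \<Rightarrow> ('v \<Rightarrow> real) \<Rightarrow> bool" where
  "orthonormal_eigenbasis M \<beta> ev \<longleftrightarrow>
     (\<forall>a b. \<beta> a \<bullet> \<beta> b = (if a = b then 1 else 0)) \<and> (\<forall>a. M *v \<beta> a = ev a *\<^sub>R \<beta> a)"

lemma symmetric_matrix_orthonormal_eigenbasis:
  fixes M :: "real^'v^'v"
  assumes "transpose M = M"
  obtains \<beta> ev where "orthonormal_eigenbasis M \<beta> ev"
proof -
  obtain B where B: "finite B" "card B = CARD('v)" "pairwise (\<lambda>b c. b \<bullet> c = 0) B"
    and eig: "\<forall>b\<in>B. b \<bullet> b = 1 \<and> (\<exists>e. M *v b = e *\<^sub>R b)"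
    using symmetric_matrix_orthonormal_eigenvectors[OF assms order_refl] by blast
  obtain \<beta> :: "'v \<Rightarrow> real^'v" where \<beta>: "bij_betw \<beta> UNIV B"
    using finite_same_card_bij[of "UNIV :: 'v set" B] B by auto
  then have "\<forall>a. \<exists>e. M *v \<beta> a = e *\<^sub>R \<beta> a"
    using eig by (auto simp: bij_betw_def)
  then obtain ev where ev: "\<And>a. M *v \<beta> a = ev a *\<^sub>R \<beta> a"
    by metis
  have orth: "\<beta> a \<bullet> \<beta> b = (if a = b then 1 else 0)" for a b
  proof (cases "a = b")
    case False
    then have "\<beta> a \<noteq> \<beta> b"
      using \<beta> by (auto simp: bij_betw_def inj_on_def)
    then show ?thesis
      using B(3) \<beta> False by (auto simp: pairwise_def bij_betw_def)
  qed (use eig \<beta> in \<open>auto simp: bij_betw_def\<close>)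
  show thesis
    by (rule that[of \<beta> ev]) (simp add: orthonormal_eigenbasis_def ev orth)
qed

lemma orthonormal_eigenbasis_orthogonal_matrix:
  fixes M :: "real^'v^'v"
  assumes "orthonormal_eigenbasis M \<beta> ev"
  shows "orthogonal_matrix (\<chi> i a. \<beta> a $ i)"
  using assms unfolding orthogonal_matrix
  by (simp add: Finite_Cartesian_Product.vec_eq_iff Finite_Cartesian_Product.mat_def
      matrix_matrix_mult_def transpose_def inner_vec_def orthonormal_eigenbasis_def)

lemma orthonormal_eigenbasis_diagonalization:
  fixes M :: "real^'v^'v"
  assumes basis: "orthonormal_eigenbasis M \<beta> ev"
  defines "P \<equiv> \<chi> i a. \<beta> a $ i"
  shows "M = P ** (\<chi> a b. if a = b then ev a else 0) ** transpose P"
proof -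
  have "(\<Sum>k\<in>UNIV. M $ i $ k * \<beta> a $ k) = \<beta> a $ i * ev a" for i a
  proof -
    have "(M *v \<beta> a) $ i = (ev a *\<^sub>R \<beta> a) $ i"
      using basis by (simp add: orthonormal_eigenbasis_def)
    then show ?thesis
      by (simp add: matrix_vector_mult_def mult.commute)
  qed
  then have MP: "M ** P = P ** (\<chi> a b. if a = b then ev a else 0)"
    by (simp add: Finite_Cartesian_Product.vec_eq_iff matrix_matrix_mult_def P_def
        if_distrib[of "\<lambda>x. _ * x"] cong: if_cong)
  have "P ** transpose P = Finite_Cartesian_Product.mat 1"
    using orthonormal_eigenbasis_orthogonal_matrix[OF basis] by (simp add: orthogonal_matrix_def P_def)
  then have "M = M ** (P ** transpose P)"
    by simp
  also have "\<dots> = P ** (\<chi> a b. if a = b then ev a else 0) ** transpose P"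
    by (simp add: matrix_mul_assoc MP)
  finally show ?thesis .
qed

section \<open>Counting eigenvalues with quadratic forms\<close>

lemma orthonormal_eigenbasis_expansion:
  fixes M :: "real^'v^'v"
  assumes "orthonormal_eigenbasis M \<beta> ev"
  shows "x = (\<Sum>a\<in>UNIV. (x \<bullet> \<beta> a) *\<^sub>R \<beta> a)"
proof -
  define P :: "real^'v^'v" where "P = (\<chi> i a. \<beta> a $ i)"
  have "P ** transpose P = Finite_Cartesian_Product.mat 1"
    using orthonormal_eigenbasis_orthogonal_matrix[OF assms] by (simp add: orthogonal_matrix_def P_def)
  then have "x = P *v (transpose P *v x)"
    by (simp only: matrix_vector_mul_assoc matrix_vector_mul_lid)
  also have "\<dots> = (\<Sum>a\<in>UNIV. (x \<bullet> \<beta> a) *\<^sub>R \<beta> a)"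
    by (simp add: matrix_mult_sum column_def P_def scalar_mult_eq_scaleR transpose_def
        matrix_vector_mult_def inner_vec_def mult.commute)
  finally show ?thesis .
qed

lemma orthonormal_eigenbasis_quadratic_form:
  fixes M :: "real^'v^'v"
  assumes "orthonormal_eigenbasis M \<beta> ev"
  shows "x \<bullet> (M *v x) - \<mu> * (x \<bullet> x) = (\<Sum>a\<in>UNIV. (ev a - \<mu>) * (x \<bullet> \<beta> a)\<^sup>2)"
proof -
  have expand: "x = (\<Sum>a\<in>UNIV. (x \<bullet> \<beta> a) *\<^sub>R \<beta> a)"
    by (rule orthonormal_eigenbasis_expansion[OF assms])
  have "M *v x = (\<Sum>a\<in>UNIV. (x \<bullet> \<beta> a * ev a) *\<^sub>R \<beta> a)"
    using assms by (subst expand) (simp add: vec.sum matrix_vector_mult_scaleR orthonormal_eigenbasis_def)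
  then have "x \<bullet> (M *v x) = (\<Sum>a\<in>UNIV. ev a * (x \<bullet> \<beta> a)\<^sup>2)"
    by (simp add: inner_sum_right power2_eq_square mult_ac)
  moreover have "x \<bullet> x = (\<Sum>a\<in>UNIV. (x \<bullet> \<beta> a)\<^sup>2)"
    by (subst (2) expand) (simp add: inner_sum_right power2_eq_square)
  ultimately show ?thesis
    by (simp add: sum_distrib_left sum_subtractf left_diff_distrib)
qed

lemma orthonormal_eigenbasis_gt_on_span:
  fixes M :: "real^'v^'v"
  assumes basis: "orthonormal_eigenbasis M \<beta> ev"
    and x: "x \<in> span (\<beta> ` {a. \<mu> < ev a})" "x \<noteq> 0"
  shows "\<mu> * (x \<bullet> x) < x \<bullet> (M *v x)"
proof -
  have outside: "x \<bullet> \<beta> a = 0" if "\<not> \<mu> < ev a" for a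
  proof -
    have "real_inner_class.orthogonal (\<beta> a) x"
      using basis that by (intro orthogonal_to_span[OF x(1)])
        (auto simp: orthonormal_eigenbasis_def real_inner_class.orthogonal_def)
    then show ?thesis
      by (simp add: real_inner_class.orthogonal_def inner_commute)
  qed
  have "\<exists>a. \<mu> < ev a \<and> x \<bullet> \<beta> a \<noteq> 0"
  proof (rule ccontr)
    assume "\<not> ?thesis"
    then have "x \<bullet> \<beta> a = 0" for a
      using outside by blast
    then have "x = 0"
      using orthonormal_eigenbasis_expansion[OF basis, of x] by simp
    with x(2) show False ..
  qed
  then obtain a where "\<mu> < ev a" "x \<bullet> \<beta> a \<noteq> 0"
    by blast
  moreover have "0 \<le> (ev b - \<mu>) * (x \<bullet> \<beta> b)\<^sup>2" for b
    using outside[of b] by (cases "\<mu> < ev b") auto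
  ultimately have "0 < (\<Sum>a\<in>UNIV. (ev a - \<mu>) * (x \<bullet> \<beta> a)\<^sup>2)"
    by (intro sum_pos2[of _ a]) auto
  then show ?thesis
    using orthonormal_eigenbasis_quadratic_form[OF basis, of x \<mu>] by simp
qed

lemma dim_le_DIM_if_kernel_avoids_span:
  fixes f :: "'a::euclidean_space \<Rightarrow> 'b::euclidean_space"
  assumes f: "linear f" and kernel: "\<And>x. x \<in> span S \<Longrightarrow> f x = 0 \<Longrightarrow> x = 0"
  shows "dim S \<le> DIM('b)"
proof -
  have "inj_on f (span S)"
  proof (rule inj_onI)
    fix x y assume "x \<in> span S" "y \<in> span S" "f x = f y"
    then show "x = y"
      using kernel[of "x - y"] by (simp add: span_diff linear_diff[OF f])
  qed
  then have "dim S = dim (f ` S)"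
    by (simp add: dim_image_eq[OF f])
  also have "\<dots> \<le> DIM('b)"
    by (rule dim_subset_UNIV)
  finally show ?thesis .
qed

lemma card_eigenvalues_gt_le_DIM:
  fixes f :: "real^'v \<Rightarrow> 'b::euclidean_space"
  assumes basis: "orthonormal_eigenbasis M \<beta> ev" and f: "linear f"
    and kernel: "\<And>x. f x = 0 \<Longrightarrow> x \<bullet> (M *v x) \<le> \<mu> * (x \<bullet> x)"
  shows "card {a. \<mu> < ev a} \<le> DIM('b)"
proof -
  have orth: "\<beta> a \<bullet> \<beta> b = (if a = b then 1 else 0)" for a b
    using basis by (simp add: orthonormal_eigenbasis_def)
  have "inj \<beta>"
  proof (rule injI)
    fix a b assume "\<beta> a = \<beta> b"
    then have "\<beta> a \<bullet> \<beta> b = 1"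
      using orth[of a a] by simp
    then show "a = b"
      using orth[of a b] by (simp split: if_splits)
  qed
  moreover have "independent (\<beta> ` {a. \<mu> < ev a})"
  proof (rule pairwise_orthogonal_independent)
    show "pairwise real_inner_class.orthogonal (\<beta> ` {a. \<mu> < ev a})"
      using orth by (auto simp: pairwise_def real_inner_class.orthogonal_def)
    show "0 \<notin> \<beta> ` {a. \<mu> < ev a}"
      using orth by (metis (no_types) imageE inner_zero_left zero_neq_one)
  qed
  ultimately have "card {a. \<mu> < ev a} = dim (\<beta> ` {a. \<mu> < ev a})"
    by (simp add: dim_eq_card_independent card_image inj_on_subset)
  also have "\<dots> \<le> DIM('b)"
  proof (rule dim_le_DIM_if_kernel_avoids_span[OF f])
    fix x assume x: "x \<in> span (\<beta> ` {a. \<mu> < ev a})" "f x = 0"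
    show "x = 0"
    proof (rule ccontr)
      assume "x \<noteq> 0"
      with x(1) have "\<mu> * (x \<bullet> x) < x \<bullet> (M *v x)"
        by (rule orthonormal_eigenbasis_gt_on_span[OF basis])
      with kernel[OF x(2)] show False
        by linarith
    qed
  qed
  finally show ?thesis .
qed

section \<open>Pairwise obtuse vectors\<close>

lemma nonpos_inner_relation_positive_part:
  fixes Q :: "'v::finite \<Rightarrow> 'a::real_inner" and y :: "'v \<Rightarrow> real"
  assumes nonpos: "\<And>a b. a \<noteq> b \<Longrightarrow> Q a \<bullet> Q b \<le> 0"
    and rel: "(\<Sum>a\<in>UNIV. y a *\<^sub>R Q a) = 0"
  shows "(\<Sum>b\<in>{a. 0 < y a}. y b *\<^sub>R Q b) = 0"
proof -
  define P where "P = {a. 0 < y a}"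
  define N where "N = {a. y a < 0}"
  define v where "v = (\<Sum>b\<in>P. y b *\<^sub>R Q b)"
  have "(\<Sum>a\<in>UNIV. y a *\<^sub>R Q a) = (\<Sum>a\<in>P \<union> N. y a *\<^sub>R Q a)"
    by (rule sum.mono_neutral_right) (auto simp: P_def N_def linorder_neq_iff)
  also have "\<dots> = v - (\<Sum>c\<in>N. (- y c) *\<^sub>R Q c)"
    by (subst sum.union_disjoint) (auto simp: P_def N_def v_def sum_negf)
  finally have vN: "v = (\<Sum>c\<in>N. (- y c) *\<^sub>R Q c)"
    using rel by simp
  have "v \<bullet> v = (\<Sum>b\<in>P. y b * (Q b \<bullet> (\<Sum>c\<in>N. (- y c) *\<^sub>R Q c)))"
    by (subst (2) vN) (simp add: v_def inner_sum_left)
  also have "\<dots> = (\<Sum>b\<in>P. \<Sum>c\<in>N. (y b * - y c) * (Q b \<bullet> Q c))"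
    by (simp add: inner_sum_right sum_distrib_left mult.assoc)
  also have "\<dots> \<le> 0"
  proof (intro sum_nonpos mult_nonneg_nonpos)
    fix b c assume "b \<in> P" "c \<in> N"
    then show "0 \<le> y b * - y c"
      using mult_pos_neg[of "y b" "y c"] by (simp add: P_def N_def)
    from \<open>b \<in> P\<close> \<open>c \<in> N\<close> have "b \<noteq> c"
      by (auto simp: P_def N_def)
    then show "Q b \<bullet> Q c \<le> 0"
      by (rule nonpos)
  qed
  finally have "v \<bullet> v = 0"
    using inner_ge_zero[of v] by linarith
  then show ?thesis
    by (simp add: v_def P_def)
qed

lemma pairwise_obtuse_relation_nonpos:
  fixes Q :: "'v::finite \<Rightarrow> 'a::real_inner" and y :: "'v \<Rightarrow> real"
  assumes obtuse: "\<And>a b. a \<noteq> b \<Longrightarrow> Q a \<bullet> Q b < 0"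
    and rel: "(\<Sum>a\<in>UNIV. y a *\<^sub>R Q a) = 0" and a0: "y a0 = 0"
  shows "y a \<le> 0"
proof (rule ccontr)
  assume "\<not> y a \<le> 0"
  define P where "P = {a. 0 < y a}"
  have "0 < (\<Sum>b\<in>P. y b * - (Q a0 \<bullet> Q b))"
  proof (rule sum_pos)
    show "P \<noteq> {}"
      using \<open>\<not> y a \<le> 0\<close> by (auto simp: P_def not_le)
    fix b assume "b \<in> P"
    moreover have "b \<noteq> a0"
      using \<open>b \<in> P\<close> a0 by (auto simp: P_def)
    ultimately show "0 < y b * - (Q a0 \<bullet> Q b)"
      using obtuse[of a0 b] by (simp add: P_def mult_pos_neg)
  qed (simp add: P_def)
  moreover have "(\<Sum>b\<in>P. y b *\<^sub>R Q b) = 0"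
    unfolding P_def by (rule nonpos_inner_relation_positive_part[OF less_imp_le[OF obtuse] rel])
  then have "(\<Sum>b\<in>P. y b * (Q a0 \<bullet> Q b)) = 0"
    using inner_sum_right[of "Q a0" "\<lambda>b. y b *\<^sub>R Q b" P] by simp
  ultimately show False
    by (simp add: sum_negf)
qed

lemma pairwise_obtuse_card_le:
  fixes Q :: "'v::finite \<Rightarrow> 'a::euclidean_space"
  assumes obtuse: "\<And>a b. a \<noteq> b \<Longrightarrow> Q a \<bullet> Q b < 0"
  shows "CARD('v) \<le> DIM('a) + 1"
proof -
  fix a0 :: 'v
  define f :: "real^'v \<Rightarrow> 'a \<times> real" where "f y = (\<Sum>a\<in>UNIV. y $ a *\<^sub>R Q a, y $ a0)" for y
  have "linear f"
    by (intro linearI) (auto simp: f_def sum.distrib scaleR_add_left scaleR_sum_right)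
  moreover have "y = 0" if "f y = 0" for y
  proof -
    have rel: "(\<Sum>a\<in>UNIV. y $ a *\<^sub>R Q a) = 0" and "y $ a0 = 0"
      using that by (simp_all add: f_def zero_prod_def)
    have "y $ a = 0" for a
    proof -
      have "y $ a \<le> 0"
        using pairwise_obtuse_relation_nonpos[of Q "\<lambda>a. y $ a" a0 a] obtuse rel \<open>y $ a0 = 0\<close>
        by blast
      moreover have "- y $ a \<le> 0"
        using pairwise_obtuse_relation_nonpos[of Q "\<lambda>a. - y $ a" a0 a] obtuse rel \<open>y $ a0 = 0\<close>
        by (simp add: sum_negf)
      ultimately show ?thesis
        by linarith
    qed
    then show ?thesis
      by (simp add: Finite_Cartesian_Product.vec_eq_iff)
  qed
  ultimately have "dim (UNIV :: (real^'v) set) \<le> DIM('a \<times> real)"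
    by (intro dim_le_DIM_if_kernel_avoids_span) auto
  then show ?thesis
    by simp
qed

section \<open>The second largest eigenvalue of a Gram-type matrix\<close>

lemma proots_prod_linear_factors:
  fixes f :: "'a \<Rightarrow> 'b::idom"
  assumes "finite A"
  shows "proots (\<Prod>a\<in>A. [:- f a, 1:]) = image_mset f (mset_set A)"
  using assms
proof (induction A rule: finite_induct)
  case (insert a A)
  have "proots (\<Prod>a\<in>insert a A. [:- f a, 1:]) = proots ([:- f a, 1:] * (\<Prod>a\<in>A. [:- f a, 1:]))"
    unfolding prod.insert[OF insert.hyps] ..
  also have "\<dots> = proots [:- f a, 1:] + proots (\<Prod>a\<in>A. [:- f a, 1:])"
    using insert.hyps(1) by (intro proots_mult) (simp_all add: prod_zero_iff)
  finally show ?case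
    using insert by (simp add: proots_linear_factor)
qed simp

lemma rev_sorted_list_of_multiset_nth_1:
  fixes X :: "'a::linorder multiset"
  assumes gt: "size (filter_mset (\<lambda>x. m < x) X) \<le> 1"
    and ge: "2 \<le> size (filter_mset (\<lambda>x. m \<le> x) X)"
  shows "rev (sorted_list_of_multiset X) ! 1 = m"
proof -
  define L where "L = rev (sorted_list_of_multiset X)"
  have sorted: "sorted_wrt (\<ge>) L"
    by (simp add: L_def sorted_wrt_rev)
  have count: "length (filter P L) = size (filter_mset P X)" for P
    by (metis L_def mset_filter mset_rev mset_sorted_list_of_multiset size_mset)
  have "2 \<le> length L"
    using ge count[of "\<lambda>x. m \<le> x"] length_filter_le[of "\<lambda>x. m \<le> x" L] by linarith
  then obtain x0 x1 rest where L: "L = x0 # x1 # rest"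
    by (metis One_nat_def Suc_1 Suc_le_length_iff)
  have "\<not> x1 < m"
  proof
    assume "x1 < m"
    then have "filter (\<lambda>x. m \<le> x) L = filter (\<lambda>x. m \<le> x) [x0]"
      using sorted by (auto simp: L intro!: filter_False)
    then have "length (filter (\<lambda>x. m \<le> x) L) \<le> 1"
      by simp
    then show False
      using ge count[of "\<lambda>x. m \<le> x"] by linarith
  qed
  moreover have "\<not> m < x1"
  proof
    assume "m < x1"
    then have "m < x0"
      using sorted by (auto simp: L)
    then show False
      using gt count[of "\<lambda>x. m < x"] \<open>m < x1\<close> by (simp add: L)
  qed
  ultimately show ?thesis
    by (simp add: L_def[symmetric] L)
qed

lemma mat_reindex_mult:
  fixes A B :: "real^'v^'v"
  assumes g: "bij_betw g {..<n} UNIV"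
  shows "Matrix.mat n n (\<lambda>(i, j). (A ** B) $ g i $ g j) =
    Matrix.mat n n (\<lambda>(i, j). A $ g i $ g j) * Matrix.mat n n (\<lambda>(i, j). B $ g i $ g j)"
    (is "?AB = ?A * ?B")
proof (rule eq_matI)
  fix i j assume "i < dim_row (?A * ?B)" and "j < dim_col (?A * ?B)"
  then show "?AB $$ (i, j) = (?A * ?B) $$ (i, j)"
    using sum.reindex_bij_betw[OF g, of "\<lambda>k. A $ g i $ k * B $ k $ g j"]
    by (simp add: matrix_matrix_mult_def scalar_prod_def atLeast0LessThan)
qed simp_all

lemma mat_reindex_transpose:
  "Matrix.mat n n (\<lambda>(i, j). transpose A $ g i $ g j) = transpose_mat (Matrix.mat n n (\<lambda>(i, j). A $ g i $ g j))"
  by (rule eq_matI) (simp_all add: transpose_def)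

lemma mat_reindex_mat_1:
  assumes "inj_on g {..<n}"
  shows "Matrix.mat n n (\<lambda>(i, j). Finite_Cartesian_Product.mat 1 $ g i $ g j) = 1\<^sub>m n"
  using assms by (intro eq_matI) (auto simp: Finite_Cartesian_Product.mat_def inj_on_def)

lemma char_poly_mat_reindex_diag:
  assumes inj: "inj_on g {..<n}"
  shows "char_poly (Matrix.mat n n (\<lambda>(i, j). (\<chi> a b. if a = b then ev a else 0) $ g i $ g j)) =
    (\<Prod>i\<leftarrow>[0..<n]. [:- ev (g i), 1:])"
    (is "char_poly ?D = _")
proof (subst char_poly_upper_triangular[of _ n])
  show "?D \<in> carrier_mat n n"
    by simp
  show "upper_triangular ?D"
  proof (rule upper_triangularI)
    fix i j assume "j < i" "i < dim_row ?D"
    then have "g i \<noteq> g j"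
      using inj by (auto dest: inj_onD)
    with \<open>j < i\<close> \<open>i < dim_row ?D\<close> show "?D $$ (i, j) = 0"
      by simp
  qed
  have "diag_mat ?D = map (\<lambda>i. ev (g i)) [0..<n]"
    by (simp add: diag_mat_def list_eq_iff_nth_eq)
  then show "(\<Prod>a\<leftarrow>diag_mat ?D. [:- a, 1:]) = (\<Prod>i\<leftarrow>[0..<n]. [:- ev (g i), 1:])"
    by (simp add: comp_def)
qed

lemma char_poly_orthonormal_eigenbasis:
  fixes M :: "real^'v^'v" and g :: "nat \<Rightarrow> 'v"
  assumes basis: "orthonormal_eigenbasis M \<beta> ev" and g: "bij_betw g {..<n} UNIV"
  shows "char_poly (Matrix.mat n n (\<lambda>(i, j). M $ g i $ g j)) = (\<Prod>a\<in>UNIV. [:- ev a, 1:])"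
proof -
  define R where "R X = Matrix.mat n n (\<lambda>(i, j). X $ g i $ g j)" for X :: "real^'v^'v"
  define P :: "real^'v^'v" where "P = (\<chi> i a. \<beta> a $ i)"
  define \<Lambda> :: "real^'v^'v" where "\<Lambda> = (\<chi> a b. if a = b then ev a else 0)"
  have inj: "inj_on g {..<n}"
    using g by (simp add: bij_betw_def)
  have R_mult: "R (X ** Y) = R X * R Y" and R_transpose: "R (transpose X) = transpose_mat (R X)" for X Y
    unfolding R_def by (rule mat_reindex_mult[OF g], rule mat_reindex_transpose)
  have "M = P ** \<Lambda> ** transpose P"
    using orthonormal_eigenbasis_diagonalization[OF basis] by (simp only: P_def \<Lambda>_def)
  then have "R P * R \<Lambda> * transpose_mat (R P) = R M"
    by (simp only: R_mult R_transpose)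
  moreover have "P ** transpose P = Finite_Cartesian_Product.mat 1"
    and "transpose P ** P = Finite_Cartesian_Product.mat 1"
    using orthonormal_eigenbasis_orthogonal_matrix[OF basis] by (simp_all add: orthogonal_matrix_def P_def)
  then have "R P * transpose_mat (R P) = 1\<^sub>m n" and "transpose_mat (R P) * R P = 1\<^sub>m n"
    using mat_reindex_mat_1[OF inj] unfolding R_transpose[symmetric] R_mult[symmetric]
    by (simp_all add: R_def)
  moreover have "R X \<in> carrier_mat n n" and "dim_row (R X) = n" for X
    by (simp_all add: R_def)
  ultimately have "similar_mat_wit (R M) (R \<Lambda>) (R P) (transpose_mat (R P))"
    by (simp add: similar_mat_wit_def Let_def)
  then have "char_poly (R M) = char_poly (R \<Lambda>)"
    by (intro char_poly_similar) (auto simp: similar_mat_def)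
  also have "\<dots> = (\<Prod>i\<leftarrow>[0..<n]. [:- ev (g i), 1:])"
    unfolding R_def \<Lambda>_def by (rule char_poly_mat_reindex_diag[OF inj])
  also have "\<dots> = (\<Prod>a\<in>UNIV. [:- ev a, 1:])"
    using prod.reindex_bij_betw[OF g, of "\<lambda>a. [:- ev a, 1:]"]
    by (simp add: prod.distinct_set_conv_list[symmetric] atLeast0LessThan)
  finally show ?thesis
    by (simp add: R_def)
qed

lemma norm_sum_scaleR_gram:
  fixes Q :: "'v::finite \<Rightarrow> 'a::real_inner" and M :: "real^'v^'v"
  assumes gram: "\<And>a b. Q a \<bullet> Q b = \<gamma> + (if a = b then 1 else 0) - s * M $ a $ b"
  shows "(norm (\<Sum>a\<in>UNIV. x $ a *\<^sub>R Q a))\<^sup>2 = \<gamma> * (\<Sum>a\<in>UNIV. x $ a)\<^sup>2 + x \<bullet> x - s * (x \<bullet> (M *v x))"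
proof -
  have "(norm (\<Sum>a\<in>UNIV. x $ a *\<^sub>R Q a))\<^sup>2 = (\<Sum>a\<in>UNIV. x $ a * (Q a \<bullet> (\<Sum>b\<in>UNIV. x $ b *\<^sub>R Q b)))"
    by (simp add: power2_norm_eq_inner inner_sum_left)
  also have "\<dots> = (\<Sum>a\<in>UNIV. \<Sum>b\<in>UNIV. x $ a * x $ b * (Q a \<bullet> Q b))"
    by (simp add: inner_sum_right sum_distrib_left mult.assoc)
  also have "\<dots> = (\<Sum>a\<in>UNIV. \<Sum>b\<in>UNIV. \<gamma> * (x $ a * x $ b) + (if a = b then x $ a * x $ b else 0)
                      - s * (x $ a * (M $ a $ b * x $ b)))"
    by (simp add: gram algebra_simps if_distrib[of "\<lambda>t. _ * t"] cong: if_cong)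
  also have "\<dots> = \<gamma> * (\<Sum>a\<in>UNIV. \<Sum>b\<in>UNIV. x $ a * x $ b) + (\<Sum>a\<in>UNIV. x $ a * x $ a)
                    - s * (\<Sum>a\<in>UNIV. x $ a * (\<Sum>b\<in>UNIV. M $ a $ b * x $ b))"
    by (simp add: sum.distrib sum_subtractf sum_distrib_left)
  also have "\<dots> = \<gamma> * (\<Sum>a\<in>UNIV. x $ a)\<^sup>2 + x \<bullet> x - s * (x \<bullet> (M *v x))"
    by (simp add: power2_eq_square sum_product inner_vec_def matrix_vector_mult_def)
  finally show ?thesis .
qed

lemma gram_offset_nonneg:
  fixes Q :: "'v::finite \<Rightarrow> 'a::euclidean_space" and M :: "real^'v^'v"
  assumes card: "DIM('a) + 2 \<le> CARD('v)"
    and gram: "\<And>a b. Q a \<bullet> Q b = \<gamma> + (if a = b then 1 else 0) - s * M $ a $ b"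
    and s: "0 < s" and nonneg: "\<And>a b. 0 \<le> M $ a $ b"
  shows "0 \<le> \<gamma>"
proof (rule ccontr)
  assume "\<not> 0 \<le> \<gamma>"
  have "Q a \<bullet> Q b < 0" if "a \<noteq> b" for a b
  proof -
    have "0 \<le> s * M $ a $ b"
      using s nonneg[of a b] by simp
    then show ?thesis
      using gram[of a b] that \<open>\<not> 0 \<le> \<gamma>\<close> by simp
  qed
  then show False
    using pairwise_obtuse_card_le[of Q] card by simp
qed

lemma gram_symmetric:
  fixes Q :: "'v::finite \<Rightarrow> 'a::real_inner" and M :: "real^'v^'v"
  assumes gram: "\<And>a b. Q a \<bullet> Q b = \<gamma> + (if a = b then 1 else 0) - s * M $ a $ b"
    and "s \<noteq> 0"
  shows "transpose M = M"
proof -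
  have "M $ a $ b = M $ b $ a" for a b
  proof -
    have "s * M $ a $ b = s * M $ b $ a"
      using gram[of a b] gram[of b a] inner_commute[of "Q a" "Q b"] by (cases "a = b") auto
    then show ?thesis
      using \<open>s \<noteq> 0\<close> by simp
  qed
  then show ?thesis
    by (simp add: Finite_Cartesian_Product.vec_eq_iff transpose_def)
qed

lemma gram_quadratic_form:
  fixes Q :: "'v::finite \<Rightarrow> 'a::real_inner" and M :: "real^'v^'v"
  assumes gram: "\<And>a b. Q a \<bullet> Q b = \<gamma> + (if a = b then 1 else 0) - s * M $ a $ b"
    and "s \<noteq> 0"
  shows "s * (x \<bullet> (M *v x) - 1 / s * (x \<bullet> x)) = \<gamma> * (\<Sum>a\<in>UNIV. x $ a)\<^sup>2 - (norm (\<Sum>a\<in>UNIV. x $ a *\<^sub>R Q a))\<^sup>2"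
proof -
  have "s * (x \<bullet> (M *v x) - 1 / s * (x \<bullet> x)) = s * (x \<bullet> (M *v x)) - x \<bullet> x"
    using \<open>s \<noteq> 0\<close> by (simp add: right_diff_distrib)
  then show ?thesis
    using norm_sum_scaleR_gram[OF gram, of x] by simp
qed

lemma gram_card_eigenvalues_gt:
  fixes Q :: "'v::finite \<Rightarrow> 'a::real_inner" and M :: "real^'v^'v"
  assumes basis: "orthonormal_eigenbasis M \<beta> ev"
    and gram: "\<And>a b. Q a \<bullet> Q b = \<gamma> + (if a = b then 1 else 0) - s * M $ a $ b"
    and s: "0 < s"
  shows "card {a. 1 / s < ev a} \<le> 1"
proof -
  have "card {a. 1 / s < ev a} \<le> DIM(real)"
  proof (rule card_eigenvalues_gt_le_DIM[OF basis])
    show "linear (\<lambda>x :: real^'v. \<Sum>a\<in>UNIV. x $ a)"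
      by (intro linearI) (simp_all add: sum.distrib sum_distrib_left)
    show "x \<bullet> (M *v x) \<le> 1 / s * (x \<bullet> x)" if "(\<Sum>a\<in>UNIV. x $ a) = 0" for x
    proof -
      have "s * (x \<bullet> (M *v x) - 1 / s * (x \<bullet> x)) \<le> 0"
        using gram_quadratic_form[OF gram, of x] s that by simp
      then show ?thesis
        using s by (simp add: mult_le_0_iff)
    qed
  qed
  then show ?thesis
    by simp
qed

lemma gram_card_eigenvalues_lt:
  fixes Q :: "'v::finite \<Rightarrow> 'a::euclidean_space" and M :: "real^'v^'v"
  assumes basis: "orthonormal_eigenbasis M \<beta> ev"
    and gram: "\<And>a b. Q a \<bullet> Q b = \<gamma> + (if a = b then 1 else 0) - s * M $ a $ b"
    and s: "0 < s" and "0 \<le> \<gamma>"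
  shows "card {a. ev a < 1 / s} \<le> DIM('a)"
proof -
  have neg: "(- M) *v x = - (M *v x)" for x
    by (simp add: Finite_Cartesian_Product.vec_eq_iff matrix_vector_mult_def sum_negf)
  have "card {a. - (1 / s) < - ev a} \<le> DIM('a)"
  proof (rule card_eigenvalues_gt_le_DIM)
    show "orthonormal_eigenbasis (- M) \<beta> (\<lambda>a. - ev a)"
      using basis neg by (simp add: orthonormal_eigenbasis_def)
    show "linear (\<lambda>x :: real^'v. \<Sum>a\<in>UNIV. x $ a *\<^sub>R Q a)"
      by (intro linearI) (simp_all add: sum.distrib scaleR_add_left scaleR_sum_right)
    show "x \<bullet> (- M *v x) \<le> - (1 / s) * (x \<bullet> x)" if "(\<Sum>a\<in>UNIV. x $ a *\<^sub>R Q a) = 0" for x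
    proof -
      have "0 \<le> s * (x \<bullet> (M *v x) - 1 / s * (x \<bullet> x))"
        using gram_quadratic_form[OF gram, of x] s that \<open>0 \<le> \<gamma>\<close> by simp
      then show ?thesis
        using s neg by (simp add: zero_le_mult_iff)
    qed
  qed
  then show ?thesis
    by simp
qed

lemma second_largest_eigenvalue_gram:
  fixes Q :: "'v::finite \<Rightarrow> real^'n" and M :: "real^'v^'v" and g :: "nat \<Rightarrow> 'v"
  assumes card: "CARD('v) = CARD('n) + 2"
    and gram: "\<And>a b. Q a \<bullet> Q b = \<gamma> + (if a = b then 1 else 0) - s * M $ a $ b"
    and s: "0 < s" and nonneg: "\<And>a b. 0 \<le> M $ a $ b"
    and g: "bij_betw g {..<CARD('v)} UNIV"
  shows "rev (sorted_list_of_multiset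
           (proots (char_poly (Matrix.mat CARD('v) CARD('v) (\<lambda>(i, j). M $ g i $ g j))))) ! 1 = 1 / s"
proof -
  have "0 \<le> \<gamma>"
    using gram_offset_nonneg[OF _ gram s nonneg] card by simp
  obtain \<beta> ev where basis: "orthonormal_eigenbasis M \<beta> ev"
    using symmetric_matrix_orthonormal_eigenbasis[OF gram_symmetric[OF gram]] s by blast
  have count: "size (filter_mset P (image_mset ev (mset_set UNIV))) = card {a. P (ev a)}" for P
    by (simp flip: image_mset_filter_mset_swap add: filter_mset_mset_set)
  have "card {a. 1 / s \<le> ev a} + card {a. ev a < 1 / s} = CARD('v)"
  proof -
    have "{a. 1 / s \<le> ev a} \<union> {a. ev a < 1 / s} = UNIV"
      by auto
    moreover have "{a. 1 / s \<le> ev a} \<inter> {a. ev a < 1 / s} = {}"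
      by auto
    ultimately show ?thesis
      using card_Un_disjoint[of "{a. 1 / s \<le> ev a}" "{a. ev a < 1 / s}"] by simp
  qed
  then have "rev (sorted_list_of_multiset (image_mset ev (mset_set UNIV))) ! 1 = 1 / s"
    using gram_card_eigenvalues_gt[OF basis gram s] gram_card_eigenvalues_lt[OF basis gram s \<open>0 \<le> \<gamma>\<close>]
      card count
    by (intro rev_sorted_list_of_multiset_nth_1) simp_all
  then show ?thesis
    by (simp add: char_poly_orthonormal_eigenbasis[OF basis g] proots_prod_linear_factors)
qed

lemma second_largest_adj_eigenvalue_gram:
  fixes Q :: "nat \<Rightarrow> real^'n" and E :: "nat \<Rightarrow> nat \<Rightarrow> bool"
  assumes gram: "\<And>i j. i < CARD('n) + 2 \<Longrightarrow> j < CARD('n) + 2 \<Longrightarrow>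
      Q i \<bullet> Q j = \<gamma> + (if i = j then 1 else 0) - s * (if E i j then 1 else 0)"
    and s: "0 < s"
  shows "adj_eigenvalues (CARD('n) + 2) E ! 1 = 1 / s"
proof -
  let ?N = "CARD('n) + 2"
  \<comment> \<open>Vertex weights live in \<open>real^'n option option\<close>, a Euclidean space of dimension \<open>d + 2\<close>.\<close>
  have card: "CARD('n option option) = ?N"
    by (simp add: card_UNIV_option)
  obtain g :: "nat \<Rightarrow> 'n option option" where g: "bij_betw g {..<?N} UNIV"
    using ex_bij_betw_nat_finite[of "UNIV :: 'n option option set"] card by (auto simp: atLeast0LessThan)
  define h where "h = inv_into {..<?N} g"
  have h: "h a < ?N" "g (h a) = a" for a
    using bij_betwE[OF bij_betw_inv_into[OF g]] bij_betw_inv_into_right[OF g] by (auto simp: h_def)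
  have hg: "h (g i) = i" if "i < ?N" for i
    using bij_betw_inv_into_left[OF g] that by (simp add: h_def)
  define M :: "real^'n option option^'n option option" where "M = (\<chi> a b. if E (h a) (h b) then 1 else 0)"
  have gram': "(Q \<circ> h) a \<bullet> (Q \<circ> h) b = \<gamma> + (if a = b then 1 else 0) - s * M $ a $ b" for a b
  proof -
    have "h a = h b \<longleftrightarrow> a = b"
      using h(2) by metis
    then show ?thesis
      using gram[of "h a" "h b"] h(1)[of a] h(1)[of b] by (simp add: M_def)
  qed
  have "bij_betw g {..<CARD('n option option)} UNIV"
    using g by (simp only: card)
  then have "rev (sorted_list_of_multiset (proots (char_poly
      (Matrix.mat CARD('n option option) CARD('n option option) (\<lambda>(i, j). M $ g i $ g j))))) ! 1 = 1 / s"
    by (intro second_largest_eigenvalue_gram[OF card gram' s]) (simp_all add: M_def)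
  moreover have "adj_matrix ?N E = Matrix.mat ?N ?N (\<lambda>(i, j). M $ g i $ g j)"
  proof (rule eq_matI)
    fix i j assume "i < dim_row (Matrix.mat ?N ?N (\<lambda>(i, j). M $ g i $ g j))"
      and "j < dim_col (Matrix.mat ?N ?N (\<lambda>(i, j). M $ g i $ g j))"
    then show "adj_matrix ?N E $$ (i, j) = Matrix.mat ?N ?N (\<lambda>(i, j). M $ g i $ g j) $$ (i, j)"
      by (simp add: adj_matrix_def M_def hg)
  qed (simp_all add: adj_matrix_def)
  ultimately show ?thesis
    unfolding adj_eigenvalues_def card by simp
qed

section \<open>Spherical two-distance sets\<close>

lemma inner_sphere_center:
  fixes x y c :: "'a::real_inner"
  assumes "x \<in> sphere c r" and "y \<in> sphere c r"
  shows "(x - c) \<bullet> (y - c) = r\<^sup>2 - (dist x y)\<^sup>2 / 2"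
  using assms dot_norm_neg[of "x - c" "y - c"] by (simp add: dist_norm norm_minus_commute)

lemma two_distance_set_Min_Max:
  assumes "two_distance_set S"
  shows "0 < Min (dist_set S)" and "Min (dist_set S) < Max (dist_set S)"
    and "\<And>x y. x \<in> S \<Longrightarrow> y \<in> S \<Longrightarrow> x \<noteq> y \<Longrightarrow> dist x y = Min (dist_set S) \<or> dist x y = Max (dist_set S)"
proof -
  obtain d1 d2 where D: "dist_set S = {d1, d2}" "d1 \<noteq> d2"
    using assms by (auto simp: two_distance_set_def card_2_iff)
  moreover have "0 < d" if "d \<in> dist_set S" for d
    using that by (auto simp: dist_set_def)
  ultimately show "0 < Min (dist_set S)" "Min (dist_set S) < Max (dist_set S)"
    by (auto simp: min_def max_def)
  show "dist x y = Min (dist_set S) \<or> dist x y = Max (dist_set S)" if "x \<in> S" "y \<in> S" "x \<noteq> y" for x y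
    using that D by (auto simp: dist_set_def min_def max_def)
qed

lemma spherical_rep_distances:
  assumes "has_spherical_rep TYPE('n::finite) V E k"
  obtains p :: "nat \<Rightarrow> real^'n" and c r b where "1 < k" and "0 < b" and "p ` V \<subseteq> sphere c r"
    and "\<And>i. i \<in> V \<Longrightarrow> \<not> E i i"
    and "\<And>i j. i \<in> V \<Longrightarrow> j \<in> V \<Longrightarrow> i \<noteq> j \<Longrightarrow> dist (p i) (p j) = (if E i j then k * b else b)"
proof -
  obtain p :: "nat \<Rightarrow> real^'n" where inj: "inj_on p V" and two: "two_distance_set (p ` V)"
    and ratio: "distance_ratio (p ` V) = k" and "\<exists>c r. p ` V \<subseteq> sphere c r"
    and adj: "\<forall>i\<in>V. \<forall>j\<in>V. E i j \<longleftrightarrow> associated_graph (p ` V) (p i) (p j)"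
    using assms unfolding has_spherical_rep_def by blast
  then obtain c r where sphere: "p ` V \<subseteq> sphere c r"
    by blast
  define b where "b = Min (dist_set (p ` V))"
  have "0 < b" and "b < Max (dist_set (p ` V))"
    using two_distance_set_Min_Max(1,2)[OF two] by (simp_all add: b_def)
  moreover have "k = Max (dist_set (p ` V)) / b"
    using ratio by (simp add: b_def distance_ratio_def)
  ultimately have "1 < k" and Max: "Max (dist_set (p ` V)) = k * b"
    by simp_all
  have "\<not> E i i" if "i \<in> V" for i
    using adj that by (simp add: associated_graph_def)
  moreover have "dist (p i) (p j) = (if E i j then k * b else b)" if "i \<in> V" "j \<in> V" "i \<noteq> j" for i j
  proof -
    have "p i \<noteq> p j"
      using inj that by (auto simp: inj_on_def)
    then have "dist (p i) (p j) = b \<or> dist (p i) (p j) = k * b"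
      using two_distance_set_Min_Max(3)[OF two] that by (simp add: b_def Max)
    moreover have "E i j \<longleftrightarrow> dist (p i) (p j) = k * b"
      using adj \<open>p i \<noteq> p j\<close> that by (simp add: associated_graph_def Max)
    moreover have "b \<noteq> k * b"
      using \<open>1 < k\<close> \<open>0 < b\<close> by simp
    ultimately show ?thesis
      by auto
  qed
  ultimately show thesis
    by (rule that[OF \<open>1 < k\<close> \<open>0 < b\<close> sphere])
qed

lemma spherical_rep_gram:
  assumes "has_spherical_rep TYPE('n::finite) V E k"
  obtains Q :: "nat \<Rightarrow> real^'n" and \<gamma> where "1 < k"
    and "\<And>i j. i \<in> V \<Longrightarrow> j \<in> V \<Longrightarrow>
           Q i \<bullet> Q j = \<gamma> + (if i = j then 1 else 0) - (k\<^sup>2 - 1) * (if E i j then 1 else 0)"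
proof -
  obtain p :: "nat \<Rightarrow> real^'n" and c r b where "1 < k" and "0 < b" and sphere: "p ` V \<subseteq> sphere c r"
    and irrefl: "\<And>i. i \<in> V \<Longrightarrow> \<not> E i i"
    and dist: "\<And>i j. i \<in> V \<Longrightarrow> j \<in> V \<Longrightarrow> i \<noteq> j \<Longrightarrow> dist (p i) (p j) = (if E i j then k * b else b)"
    by (rule spherical_rep_distances[OF assms]) blast
  define Q where "Q i = (sqrt 2 / b) *\<^sub>R (p i - c)" for i
  define \<gamma> where "\<gamma> = 2 * r\<^sup>2 / b\<^sup>2 - 1"
  have "Q i \<bullet> Q j = \<gamma> + (if i = j then 1 else 0) - (k\<^sup>2 - 1) * (if E i j then 1 else 0)"
    if "i \<in> V" "j \<in> V" for i j
  proof -
    have "sqrt 2 / b * (sqrt 2 / b) = 2 / b\<^sup>2"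
      by (simp add: power2_eq_square)
    then have "Q i \<bullet> Q j = 2 / b\<^sup>2 * (r\<^sup>2 - (dist (p i) (p j))\<^sup>2 / 2)"
      using inner_sphere_center[of "p i" c r "p j"] sphere that
      by (simp add: Q_def mult.assoc[symmetric] image_subset_iff)
    then show ?thesis
      using dist[OF that] irrefl[OF that(1)] \<open>0 < b\<close>
      by (cases "i = j") (auto simp: \<gamma>_def field_simps power_mult_distrib)
  qed
  with \<open>1 < k\<close> show thesis
    by (rule that)
qed

theorem corollary4p3:
  fixes E :: "nat \<Rightarrow> nat \<Rightarrow> bool" and k :: real
  assumes "simple_graph {0..<CARD('n::finite) + 2} E"
    and "has_spherical_rep TYPE('n) {0..<CARD('n) + 2} E k"
  shows "k = sqrt (1 / (adj_eigenvalues (CARD('n) + 2) E ! 1) + 1)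
         \<and> adj_eigenvalues (CARD('n) + 2) E ! 1 > 0"
proof -
  obtain Q :: "nat \<Rightarrow> real^'n" and \<gamma> where "1 < k" and gram: "\<And>i j.
      i \<in> {0..<CARD('n) + 2} \<Longrightarrow> j \<in> {0..<CARD('n) + 2} \<Longrightarrow>
      Q i \<bullet> Q j = \<gamma> + (if i = j then 1 else 0) - (k\<^sup>2 - 1) * (if E i j then 1 else 0)"
    using spherical_rep_gram[OF assms(2)] by blast
  moreover have "0 < k\<^sup>2 - 1"
    using \<open>1 < k\<close> by (simp add: one_less_power)
  ultimately have "adj_eigenvalues (CARD('n) + 2) E ! 1 = 1 / (k\<^sup>2 - 1)"
    by (intro second_largest_adj_eigenvalue_gram[of Q \<gamma>]) simp_all
  then show ?thesis
    using \<open>1 < k\<close> by (simp add: one_less_power)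
qed

end
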